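(* Let $G$ be a connected simple graph and let $G'$ be obtained from $G$ by a symmetric $\mathcal K_{xy}$-operation in which the sets $X$ and $Y$ are both nonempty. Then $\alpha(G)\le\alpha(G')$ and $A(\lambda,G)>A(\lambda,G')$ for every real $\lambda\ge\alpha(G')$.
   Context: For a graph $G$, $A(\lambda,G)=\det(\lambda I-A(G))$ is the characteristic polynomial of its adjacency matrix $A(G)$ and $\alpha(G)$ is the largest eigenvalue of $A(G)$. $\mathcal K_{xy}$-operation: let $G$ be a simple graph, $x\ne y$ vertices, $\mathcal K$ an induced subgraph of $G$ containing $x$ and $y$, and $N(v)$ the neighbourhood of $v$. Put $X=N(x)\setminus(V(\mathcal K)\cup N(y))$, $Y=N(y)\setminus(V(\mathcal K)\cup N(x))$, $[x,X]=\{xv:v\in X\}$, $[y,X]=\{yv:v\in X\}$, $[y,Y]=\{yv:v\in Y\}$. The graph $\mathcal K_{xy}(G)=(G-[x,X])\cup[y,X]$ (on the same vertex set) is obtained from $G$ by the $\mathcal K_{xy}$-operation. The operation is called symmetric if the graph $G-([x,X]\cup[y,Y])$ has an automorphism $\alpha$ with $\alpha(x)=y$, $\alpha(y)=x$, $\alpha(V(\mathcal K))=V(\mathcal K)$, and $\alpha(v)=v$ for every $v\in X\cup Y$. *)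

theory Defs
  imports "HOL-Analysis.Analysis"
begin

definition simple_graph :: "('n \<Rightarrow> 'n \<Rightarrow> bool) \<Rightarrow> bool" where
  "simple_graph E \<longleftrightarrow> (\<forall>u v. E u v \<longrightarrow> E v u) \<and> (\<forall>v. \<not> E v v)"

definition connected_graph :: "('n \<Rightarrow> 'n \<Rightarrow> bool) \<Rightarrow> bool" where
  "connected_graph E \<longleftrightarrow> (\<forall>u v. E\<^sup>*\<^sup>* u v)"

definition adj_matrix :: "('n::finite \<Rightarrow> 'n \<Rightarrow> bool) \<Rightarrow> real^'n^'n" where
  "adj_matrix E = (\<chi> i j. if E i j then 1 else 0)"

text \<open>Characteristic polynomial A(lambda,G) = det(lambda I - A(G)), evaluated at real lambda.\<close>
definition char_poly :: "('n::finite \<Rightarrow> 'n \<Rightarrow> bool) \<Rightarrow> real \<Rightarrow> real" where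
  "char_poly E t = det (mat t - adj_matrix E)"

definition index :: "('n::finite \<Rightarrow> 'n \<Rightarrow> bool) \<Rightarrow> real" where
  "index E = Max {t. char_poly E t = 0}"

definition nbh :: "('n \<Rightarrow> 'n \<Rightarrow> bool) \<Rightarrow> 'n \<Rightarrow> 'n set" where
  "nbh E v = {u. E v u}"

definition Xset :: "('n \<Rightarrow> 'n \<Rightarrow> bool) \<Rightarrow> 'n set \<Rightarrow> 'n \<Rightarrow> 'n \<Rightarrow> 'n set" where
  "Xset E K x y = nbh E x - (K \<union> nbh E y)"

definition Kop :: "('n \<Rightarrow> 'n \<Rightarrow> bool) \<Rightarrow> 'n set \<Rightarrow> 'n \<Rightarrow> 'n \<Rightarrow> ('n \<Rightarrow> 'n \<Rightarrow> bool)" where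
  "Kop E K x y = (\<lambda>u v.
     (E u v \<and> \<not> ((u = x \<and> v \<in> Xset E K x y) \<or> (v = x \<and> u \<in> Xset E K x y)))
     \<or> (u = y \<and> v \<in> Xset E K x y) \<or> (v = y \<and> u \<in> Xset E K x y))"

text \<open>G - ([x,X] \<union> [y,Y]) where Y = Xset E K y x.\<close>
definition Kop_core :: "('n \<Rightarrow> 'n \<Rightarrow> bool) \<Rightarrow> 'n set \<Rightarrow> 'n \<Rightarrow> 'n \<Rightarrow> ('n \<Rightarrow> 'n \<Rightarrow> bool)" where
  "Kop_core E K x y = (\<lambda>u v. E u v
     \<and> \<not> ((u = x \<and> v \<in> Xset E K x y) \<or> (v = x \<and> u \<in> Xset E K x y))
     \<and> \<not> ((u = y \<and> v \<in> Xset E K y x) \<or> (v = y \<and> u \<in> Xset E K y x)))"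

definition graph_automorphism :: "('n \<Rightarrow> 'n \<Rightarrow> bool) \<Rightarrow> ('n \<Rightarrow> 'n) \<Rightarrow> bool" where
  "graph_automorphism E \<sigma> \<longleftrightarrow> bij \<sigma> \<and> (\<forall>u v. E u v \<longleftrightarrow> E (\<sigma> u) (\<sigma> v))"

definition symmetric_Kop :: "('n \<Rightarrow> 'n \<Rightarrow> bool) \<Rightarrow> 'n set \<Rightarrow> 'n \<Rightarrow> 'n \<Rightarrow> bool" where
  "symmetric_Kop E K x y \<longleftrightarrow> (\<exists>\<sigma>. graph_automorphism (Kop_core E K x y) \<sigma>
     \<and> \<sigma> x = y \<and> \<sigma> y = x \<and> \<sigma> ` K = K
     \<and> (\<forall>v \<in> Xset E K x y \<union> Xset E K y x. \<sigma> v = v))"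

end

theory Submission
  imports Defs
begin

(* Fix t >= index G' and put M = tI - A(G), M' = tI - A(G').  The two matrices
   agree away from the rows and columns of x and y; replacing those rows and columns by the
   identity yields one common matrix Z.  A Schur complement identity,
   det M = det(2x2 Schur block at {x,y}) * det Z, turns both characteristic polynomials into
   2x2 determinants whose entries are values of the bilinear form (p,q) |-> (Z^-1 p).q at the
   indicator vectors of N(x), N(y), X and Y (taken in G - ([x,X] u [y,Y])).  Because M' is
   positive semidefinite and G' is connected, Z is positive definite with nonpositive
   off-diagonal entries, hence Z^-1 is entrywise nonnegative; the automorphism exchanging x and y
   identifies the form values belonging to x with those belonging to y.  Testing M' >= 0 on a
   suitable vector then gives A(t,G) - A(t,G') > 0.  The index comparison follows since
   A(t,G') >= 0 for t >= index G'. *)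

section \<open>Quadratic forms and determinants of real symmetric matrices\<close>

lemma quadratic_nonpos_linear_coeff_zero:
  fixes c d :: real
  assumes "\<And>s. 2 * s * c + s\<^sup>2 * d \<le> 0"
  shows "c = 0"
proof -
  define e where "e = 1 + \<bar>d\<bar>"
  have e: "e > 0" "2 * e + d > 0" by (auto simp: e_def)
  have "2 * (c / e) * c + (c / e)\<^sup>2 * d \<le> 0" by (rule assms)
  hence "c\<^sup>2 * (2 * e + d) \<le> 0"
    using e by (simp add: field_simps power2_eq_square)
  hence "c\<^sup>2 \<le> 0" using e by (simp add: mult_le_0_iff)
  thus "c = 0" by simp
qed

lemma mat_mult_vector: "mat t *v v = t *\<^sub>R (v::real^'n::finite)"
  by (simp add: vec_eq_iff matrix_vector_mult_def mat_def if_distrib if_distribR cong: if_cong)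

lemma mat_minus_mult_vector: "(mat t - A) *v v = t *\<^sub>R v - A *v (v::real^'n::finite)"
  by (simp add: matrix_vector_mult_diff_rdistrib mat_mult_vector)

lemma det_eq_0_iff_kernel: "det (M::real^'n::finite^'n) = 0 \<longleftrightarrow> (\<exists>v. v \<noteq> 0 \<and> M *v v = 0)"
  using invertible_det_nz[of M] matrix_left_invertible_ker[of M] invertible_left_inverse[of M]
  by auto

lemma symmetric_matrix_iff: "transpose A = A \<longleftrightarrow> (\<forall>i j. A$i$j = A$j$i)"
  by (auto simp: vec_eq_iff transpose_def)

lemma symmetric_matrix_inner:
  assumes "transpose A = (A::real^'n::finite^'n)"
  shows "w \<bullet> (A *v v) = v \<bullet> (A *v w)"
proof -
  have "w \<bullet> (A *v v) = (w v* A) \<bullet> v" by (simp add: dot_lmul_matrix)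
  also have "w v* A = A *v w" using assms vector_transpose_matrix[of w A] by simp
  finally show ?thesis by (simp add: inner_commute)
qed

lemma psd_kernel:
  fixes M :: "real^'n::finite^'n"
  assumes sym: "transpose M = M" and psd: "\<And>z. z \<bullet> (M *v z) \<ge> 0"
    and v: "v \<bullet> (M *v v) = 0"
  shows "M *v v = 0"
proof -
  define w where "w = M *v v"
  have "(v + s *\<^sub>R w) \<bullet> (M *v (v + s *\<^sub>R w)) = 2 * s * (w \<bullet> w) + s\<^sup>2 * (w \<bullet> (M *v w))" for s
    using v symmetric_matrix_inner[OF sym, of v w]
    by (simp add: w_def matrix_vector_right_distrib matrix_vector_mult_scaleR inner_add_left
        inner_add_right inner_commute power2_eq_square algebra_simps)
  hence "2 * s * (- (w \<bullet> w)) + s\<^sup>2 * (- (w \<bullet> (M *v w))) \<le> 0" for s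
    using psd[of "v + s *\<^sub>R w"] by simp
  hence "- (w \<bullet> w) = 0" by (rule quadratic_nonpos_linear_coeff_zero)
  thus ?thesis by (simp add: w_def)
qed

lemma rayleigh_max:
  fixes A :: "real^'n::finite^'n"
  assumes sym: "transpose A = A"
  shows "\<exists>\<mu> v. v \<noteq> 0 \<and> A *v v = \<mu> *\<^sub>R v \<and> (\<forall>z. z \<bullet> (A *v z) \<le> \<mu> * (z \<bullet> z))"
proof -
  let ?f = "\<lambda>z::real^'n. z \<bullet> (A *v z)"
  have "continuous_on (sphere 0 1) ?f" by (intro continuous_intros)
  then obtain v where v: "v \<in> sphere 0 1" and vmax: "\<And>z. z \<in> sphere 0 1 \<Longrightarrow> ?f z \<le> ?f v"
    using continuous_attains_sup[of "sphere (0::real^'n) 1" ?f] by auto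
  define \<mu> where "\<mu> = ?f v"
  have bound: "?f z \<le> \<mu> * (z \<bullet> z)" for z
  proof (cases "z = 0")
    case False
    have "(1 / norm z) *\<^sub>R z \<in> sphere 0 1" using False by simp
    hence "?f ((1 / norm z) *\<^sub>R z) \<le> \<mu>" unfolding \<mu>_def by (rule vmax)
    moreover have "?f ((1 / norm z) *\<^sub>R z) = ?f z / (norm z)\<^sup>2"
      by (simp add: matrix_vector_mult_scaleR power2_eq_square)
    ultimately have "?f z / (norm z)\<^sup>2 \<le> \<mu>" by simp
    thus ?thesis using False by (simp add: divide_le_eq dot_square_norm)
  qed simp
  define B where "B = mat \<mu> - A"
  have "transpose B = B"
    using sym by (simp add: B_def symmetric_matrix_iff mat_def)
  moreover have "z \<bullet> (B *v z) \<ge> 0" for z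
    using bound[of z] by (simp add: B_def mat_minus_mult_vector inner_diff_right)
  moreover have "v \<bullet> (B *v v) = 0"
    using v by (simp add: B_def mat_minus_mult_vector inner_diff_right \<mu>_def dot_square_norm)
  ultimately have "B *v v = 0" by (rule psd_kernel)
  hence "A *v v = \<mu> *\<^sub>R v" by (simp add: B_def mat_minus_mult_vector)
  moreover have "v \<noteq> 0" using v by auto
  ultimately show ?thesis using bound by blast
qed

text \<open>Positive (semi)definite matrices have positive (nonnegative) determinant: connect the matrix
  to the identity through positive definite matrices and use continuity of the determinant.\<close>

lemma continuous_on_det:
  assumes "\<And>i j. continuous_on S (\<lambda>s. A s $ i $ j)"
  shows "continuous_on S (\<lambda>s. det (A s :: real^'n::finite^'n))"
  unfolding det_def
  by (intro continuous_on_sum continuous_on_mult continuous_on_prod continuous_on_const assms)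

lemma det_nonzero_if_pd:
  fixes M :: "real^'n::finite^'n"
  assumes "\<And>z. z \<noteq> 0 \<Longrightarrow> z \<bullet> (M *v z) > 0"
  shows "det M \<noteq> 0"
  using assms det_eq_0_iff_kernel[of M] by force

lemma det_pos_if_pd:
  fixes M :: "real^'n::finite^'n"
  assumes pd: "\<And>z. z \<noteq> 0 \<Longrightarrow> z \<bullet> (M *v z) > 0"
  shows "det M > 0"
proof (rule ccontr)
  assume "\<not> det M > 0"
  define N where "N s = (1 - s) *\<^sub>R mat 1 + s *\<^sub>R M" for s
  have "continuous_on {0..1} (\<lambda>s. det (N s))"
    by (rule continuous_on_det) (auto simp: N_def intro!: continuous_intros)
  moreover have "det (N 0) = 1" "det (N 1) = det M" by (simp_all add: N_def)
  ultimately obtain s where s: "0 \<le> s" "s \<le> 1" "det (N s) = 0"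
    using IVT2'[of "\<lambda>s. det (N s)" 1 0 0] \<open>\<not> det M > 0\<close> by auto
  have "z \<bullet> (N s *v z) > 0" if "z \<noteq> 0" for z
  proof -
    have "z \<bullet> (N s *v z) = (1 - s) * (z \<bullet> z) + s * (z \<bullet> (M *v z))"
      by (simp add: N_def matrix_vector_mult_add_rdistrib scaleR_matrix_vector_assoc[symmetric]
          inner_add_right)
    moreover have "z \<bullet> z > 0" "z \<bullet> (M *v z) > 0" using that pd by auto
    ultimately show ?thesis using s
      by (smt (verit) mult_nonneg_nonneg mult_pos_pos)
  qed
  thus False using det_nonzero_if_pd[of "N s"] s by blast
qed

lemma det_nonneg_if_psd:
  fixes M :: "real^'n::finite^'n"
  assumes psd: "\<And>z. z \<bullet> (M *v z) \<ge> 0"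
  shows "det M \<ge> 0"
proof -
  have cont: "continuous_on UNIV (\<lambda>s. det (M + s *\<^sub>R mat 1))"
    by (rule continuous_on_det) (auto intro!: continuous_intros)
  have pos: "det (M + s *\<^sub>R mat 1) > 0" if "s > 0" for s
  proof (rule det_pos_if_pd)
    fix z :: "real^'n" assume "z \<noteq> 0"
    hence "s * (z \<bullet> z) > 0" using that by simp
    thus "z \<bullet> ((M + s *\<^sub>R mat 1) *v z) > 0"
      using psd[of z]
      by (simp add: matrix_vector_mult_add_rdistrib scaleR_matrix_vector_assoc[symmetric]
          inner_add_right)
  qed
  have "isCont (\<lambda>s. det (M + s *\<^sub>R mat 1)) 0" using cont by (simp add: continuous_on_eq_continuous_at)
  hence "((\<lambda>s. det (M + s *\<^sub>R mat 1)) \<longlongrightarrow> det M) (at_right 0)"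
    by (simp add: isCont_def filterlim_at_split)
  moreover have "\<forall>\<^sub>F s in at_right 0. det (M + s *\<^sub>R mat 1) \<ge> 0"
    using eventually_at_right_less[of 0] by (rule eventually_mono) (use pos in \<open>simp add: less_imp_le\<close>)
  ultimately show ?thesis by (simp add: tendsto_lowerbound)
qed

section \<open>The largest characteristic root of a symmetric matrix\<close>

lemma char_root_iff_eigenvalue:
  "det (mat t - A) = 0 \<longleftrightarrow> (\<exists>v. v \<noteq> 0 \<and> A *v v = t *\<^sub>R (v::real^'n::finite))"
  using det_eq_0_iff_kernel[of "mat t - A"] by (auto simp: mat_minus_mult_vector)

text \<open>Eigenvectors of distinct eigenvalues are orthogonal, so there are finitely many eigenvalues.\<close>

lemma finite_char_roots:
  fixes A :: "real^'n::finite^'n"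
  assumes sym: "transpose A = A"
  shows "finite {t. det (mat t - A) = 0}"
proof -
  let ?S = "{t. det (mat t - A) = 0}"
  define e where "e t = (SOME v. v \<noteq> 0 \<and> A *v v = t *\<^sub>R v)" for t
  have e: "e t \<noteq> 0 \<and> A *v e t = t *\<^sub>R e t" if "t \<in> ?S" for t
    using someI_ex[OF that[unfolded mem_Collect_eq char_root_iff_eigenvalue]] by (simp add: e_def)
  have orth: "e t \<bullet> e s = 0" if "t \<in> ?S" "s \<in> ?S" "t \<noteq> s" for t s
  proof -
    have "e t \<bullet> (A *v e s) = e s \<bullet> (A *v e t)" by (rule symmetric_matrix_inner[OF sym])
    hence "s * (e t \<bullet> e s) = t * (e t \<bullet> e s)" using e that by (simp add: inner_commute)
    thus ?thesis using that by simp
  qed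
  have "inj_on e ?S"
  proof (rule inj_onI)
    fix t s assume "t \<in> ?S" "s \<in> ?S" "e t = e s"
    thus "t = s" using orth[of t s] e[of t] by fastforce
  qed
  moreover have "independent (e ` ?S)"
    by (rule pairwise_orthogonal_independent)
       (use orth e in \<open>auto simp: pairwise_def orthogonal_def\<close>)
  hence "finite (e ` ?S)" using independent_bound by blast
  ultimately show ?thesis using finite_image_iff by blast
qed

lemma psd_above_char_roots:
  fixes A :: "real^'n::finite^'n"
  assumes sym: "transpose A = A"
  shows "{t. det (mat t - A) = 0} \<noteq> {}"
    and "t \<ge> Max {t. det (mat t - A) = 0} \<Longrightarrow> z \<bullet> ((mat t - A) *v z) \<ge> 0"
proof -
  obtain \<mu> v where "v \<noteq> 0" "A *v v = \<mu> *\<^sub>R v" and bound: "\<And>z. z \<bullet> (A *v z) \<le> \<mu> * (z \<bullet> z)"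
    using rayleigh_max[OF sym] by blast
  hence root: "\<mu> \<in> {t. det (mat t - A) = 0}" by (auto simp: char_root_iff_eigenvalue)
  thus "{t. det (mat t - A) = 0} \<noteq> {}" by blast
  assume "t \<ge> Max {t. det (mat t - A) = 0}"
  hence "t \<ge> \<mu>" using Max_ge[OF finite_char_roots[OF sym] root] by linarith
  hence "\<mu> * (z \<bullet> z) \<le> t * (z \<bullet> z)" by (simp add: mult_right_mono)
  thus "z \<bullet> ((mat t - A) *v z) \<ge> 0"
    using bound[of z] by (simp add: mat_minus_mult_vector inner_diff_right)
qed

text \<open>Z-matrices: if Z is positive definite with nonpositive off-diagonal entries, then Z z >= 0
  forces z >= 0, i.e. the inverse of Z is entrywise nonnegative.\<close>

lemma nonneg_solution_if_pd_offdiag_nonpos: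
  fixes Z :: "real^'n::finite^'n"
  assumes pd: "\<And>z. z \<noteq> 0 \<Longrightarrow> z \<bullet> (Z *v z) > 0"
    and offdiag: "\<And>i j. i \<noteq> j \<Longrightarrow> Z$i$j \<le> 0"
    and rhs: "\<And>i. c$i \<ge> 0" and solves: "Z *v z = c"
  shows "z$i \<ge> 0"
proof -
  define zp where "zp = (\<chi> i. max 0 (z$i))"
  define zn where "zn = (\<chi> i. max 0 (- z$i))"
  have split: "z = zp - zn" by (simp add: vec_eq_iff zp_def zn_def max_def)
  have cross: "zn \<bullet> (Z *v zp) \<le> 0"
  proof -
    have "zn$i * Z$i$j * zp$j \<le> 0" for i j
      using offdiag[of i j] by (cases "i = j") (auto simp: zn_def zp_def max_def mult_le_0_iff)
    hence "(\<Sum>i\<in>UNIV. \<Sum>j\<in>UNIV. zn$i * Z$i$j * zp$j) \<le> 0" by (intro sum_nonpos)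
    thus ?thesis
      by (simp add: inner_vec_def matrix_vector_mult_def sum_distrib_left mult.assoc)
  qed
  have "zn \<bullet> c \<ge> 0"
    unfolding inner_vec_def by (intro sum_nonneg) (simp add: zn_def rhs)
  moreover have "zn \<bullet> c = zn \<bullet> (Z *v zp) - zn \<bullet> (Z *v zn)"
    using solves split by (metis inner_diff_right matrix_vector_mult_diff_distrib)
  ultimately have "zn \<bullet> (Z *v zn) \<le> 0" using cross by simp
  hence "zn = 0" using pd by (meson not_le)
  hence "zn $ i = 0" by simp
  thus ?thesis by (simp add: zn_def)
qed

section \<open>Determinants with a 2x2 block and the Schur complement\<close>

text \<open>If all rows outside {x,y} are unit rows, only the permutations of {x,y} contribute to the
  determinant.\<close>

lemma det_two_block:
  fixes A :: "'a::comm_ring_1^'n::finite^'n"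
  assumes xy: "x \<noteq> y" and unit: "\<And>i. i \<notin> {x,y} \<Longrightarrow> A $ i = axis i 1"
  shows "det A = A$x$x * A$y$y - A$x$y * A$y$x"
proof -
  let ?g = "\<lambda>p. of_int (sign p) * (\<Prod>i\<in>UNIV. A $ i $ p i)"
  have vanish: "?g p = 0" if "p permutes UNIV" "\<not> p permutes {x,y}" for p
  proof -
    have "\<not> (\<forall>i. i \<notin> {x,y} \<longrightarrow> p i = i)"
      using that unfolding permutes_def by blast
    then obtain i where "i \<notin> {x,y}" "p i \<noteq> i" by blast
    hence "A $ i $ p i = 0" using unit by (simp add: axis_def)
    hence "(\<Prod>i\<in>UNIV. A $ i $ p i) = 0" by (intro prod_zero) auto
    thus ?thesis by simp
  qed
  have restrict: "(\<Prod>i\<in>UNIV. A $ i $ p i) = (\<Prod>i\<in>{x,y}. A $ i $ p i)" if "p permutes {x,y}" for p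
    by (rule prod.mono_neutral_right) (use that unit in \<open>auto simp: permutes_not_in axis_def\<close>)
  have "det A = sum ?g {p. p permutes {x,y}}"
    unfolding det_def
    by (rule sum.mono_neutral_right) (auto intro: vanish permutes_subset[of _ "{x,y}"])
  also have "{p. p permutes {x,y}} = {id, Transposition.transpose x y}"
    by (auto simp: permutes_doubleton_iff)
  also have "sum ?g {id, Transposition.transpose x y} = ?g id + ?g (Transposition.transpose x y)"
    using xy by (subst sum.insert) (auto simp: fun_eq_iff Transposition.transpose_def)
  finally show ?thesis
    using xy restrict[OF permutes_id] restrict[OF permutes_swap_id[of x "{x,y}" y]]
    by (simp add: sign_id sign_swap_id)
qed

lemma matrix_mult_row: "(A ** B) $ i = A $ i v* (B::real^'n::finite^'n)"
  by (simp add: vec_eq_iff matrix_matrix_mult_def vector_matrix_mult_def)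

lemma axis_vector_matrix_mult: "axis i 1 v* A = A $ (i::'n::finite)" for A :: "real^'n^'n"
  by (simp add: vec_eq_iff vector_matrix_mult_def axis_def if_distrib[of "\<lambda>t. t * _"] cong: if_cong)

definition reduced :: "real^'n^'n \<Rightarrow> 'n \<Rightarrow> 'n \<Rightarrow> real^'n^'n" where
  "reduced M x y = (\<chi> i j. if i \<notin> {x,y} \<and> j \<notin> {x,y} then M$i$j else if i = j then 1 else 0)"

definition outer_column :: "real^'n^'n \<Rightarrow> 'n \<Rightarrow> 'n \<Rightarrow> 'n \<Rightarrow> real^'n" where
  "outer_column M x y u = (\<chi> r. if r \<notin> {x,y} then M$r$u else 0)"

lemma reduced_mult_at_block:
  fixes M :: "real^'n::finite^'n"
  assumes "s \<in> {x,y}"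
  shows "(reduced M x y *v w) $ s = w $ s"
proof -
  have "(reduced M x y *v w) $ s = (\<Sum>j\<in>UNIV. if j = s then w $ j else 0)"
    unfolding matrix_vector_mult_def reduced_def vec_lambda_beta using assms by (intro sum.cong) auto
  thus ?thesis by simp
qed

lemma reduced_mult_outside_block:
  fixes M :: "real^'n::finite^'n"
  assumes "i \<notin> {x,y}" and "w $ x = 0" and "w $ y = 0"
  shows "(reduced M x y *v w) $ i = (M *v w) $ i"
  unfolding matrix_vector_mult_def reduced_def vec_lambda_beta
  using assms by (intro sum.cong) auto

text \<open>Schur complement of the block at {x,y}: with Q a right inverse of the reduced matrix Z and
  k u = Q c u, the entries of the 2x2 Schur block are M u v - k u . c v.  The factorisation
  L M = P N, N = G Z with det L = det G = 1 gives det M = det(Schur block) * det Z.\<close>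

locale schur_block =
  fixes M Q :: "real^'n::finite^'n" and x y :: 'n
  assumes xy: "x \<noteq> y" and sym: "\<And>i j. M$i$j = M$j$i"
    and inverse: "reduced M x y ** Q = mat 1"
begin

abbreviation "Z \<equiv> reduced M x y"

abbreviation "c \<equiv> outer_column M x y"

definition k :: "'n \<Rightarrow> real^'n" where "k u = Q *v c u"

definition schur :: "'n \<Rightarrow> 'n \<Rightarrow> real" where "schur u v = M$u$v - k u \<bullet> c v"

lemma M_symmetric: "transpose M = M"
  using sym by (simp add: symmetric_matrix_iff)

lemma Z_k: "Z *v k u = c u"
  by (simp add: k_def matrix_vector_mul_assoc inverse)

lemma k_block: "s \<in> {x,y} \<Longrightarrow> k u $ s = 0"
  using reduced_mult_at_block[of s x y M "k u"] Z_k[of u] by (auto simp: outer_column_def)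

lemma M_k: "(M *v k u) $ j = (if j \<in> {x,y} then k u \<bullet> c j else M$u$j)"
proof (cases "j \<in> {x,y}")
  case True
  have "(M *v k u) $ j = k u \<bullet> c j"
    unfolding matrix_vector_mult_def inner_vec_def outer_column_def vec_lambda_beta
    by (intro sum.cong) (auto simp: k_block sym)
  thus ?thesis using True by simp
next
  case False
  have "(M *v k u) $ j = (Z *v k u) $ j"
    using False k_block by (simp add: reduced_mult_outside_block)
  thus ?thesis using False by (simp add: Z_k outer_column_def sym)
qed

definition L :: "real^'n^'n" where
  "L = (\<chi> i. if i \<in> {x,y} then axis i 1 - k i else axis i 1)"

definition P :: "real^'n^'n" where
  "P = (\<chi> i j. if i \<in> {x,y} \<and> j \<in> {x,y} then schur i j else if i = j then 1 else 0)"

definition N :: "real^'n^'n" where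
  "N = (\<chi> i. if i \<in> {x,y} then axis i 1 else M $ i)"

definition G :: "real^'n^'n" where
  "G = (\<chi> i. if i \<in> {x,y} then axis i 1 else axis i 1 + M$i$x *\<^sub>R axis x 1 + M$i$y *\<^sub>R axis y 1)"

lemma L_M: "L ** M = P ** N"
proof -
  have "(L ** M) $ i $ j = (P ** N) $ i $ j" for i j
  proof (cases "i \<in> {x,y}")
    case True
    have "k i v* M = M *v k i"
      using vector_transpose_matrix[of "k i" M] M_symmetric by simp
    hence "(L ** M) $ i $ j = M $ i $ j - (M *v k i) $ j"
      using True by (simp add: matrix_mult_row L_def vector_matrix_mult_diff_distrib
          axis_vector_matrix_mult)
    also have "\<dots> = (if j \<in> {x,y} then schur i j else 0)"
      by (simp add: M_k schur_def)
    also have "\<dots> = (\<Sum>l\<in>UNIV. if l = j \<and> j \<in> {x,y} then schur i j else 0)"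
      by (simp add: sum.delta')
    also have "\<dots> = (P ** N) $ i $ j"
      unfolding matrix_matrix_mult_def vec_lambda_beta
      using True by (intro sum.cong) (auto simp: P_def N_def axis_def)
    finally show ?thesis .
  next
    case False
    have "P $ i = axis i 1" using False by (auto simp: vec_eq_iff P_def axis_def)
    thus ?thesis using False
      by (simp add: matrix_mult_row L_def N_def axis_vector_matrix_mult)
  qed
  thus ?thesis by (simp add: vec_eq_iff)
qed

lemma N_factor: "N = G ** Z"
proof -
  have "N $ i $ j = (G ** Z) $ i $ j" for i j
  proof (cases "i \<in> {x,y}")
    case True
    thus ?thesis
      by (simp add: matrix_mult_row N_def G_def axis_vector_matrix_mult) (auto simp: reduced_def axis_def)
  next
    case False
    have "(G ** Z) $ i = Z $ i + M$i$x *\<^sub>R Z $ x + M$i$y *\<^sub>R Z $ y"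
      using False by (simp add: matrix_mult_row G_def vector_matrix_left_distrib
          scaleR_vector_matrix_assoc axis_vector_matrix_mult)
    thus ?thesis using False xy by (auto simp: N_def reduced_def)
  qed
  thus ?thesis by (simp add: vec_eq_iff)
qed

lemma det_L: "det L = 1"
  using det_two_block[OF xy, of L] xy by (simp add: L_def k_block axis_def)

lemma det_G: "det G = 1"
proof -
  have "det (transpose G) = 1"
    using det_two_block[OF xy, of "transpose G"] xy
    by (auto simp: transpose_def G_def axis_def vec_eq_iff)
  thus ?thesis by simp
qed

lemma det_P: "det P = schur x x * schur y y - schur x y * schur y x"
  using det_two_block[OF xy, of P] by (simp add: P_def vec_eq_iff axis_def)

theorem schur_det: "det M = (schur x x * schur y y - schur x y * schur y x) * det Z"
proof -
  have "det L * det M = det P * (det G * det Z)"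
    by (metis L_M N_factor det_mul)
  thus ?thesis by (simp add: det_L det_G det_P)
qed

theorem schur_quadratic_form:
  defines "w \<equiv> axis x 1 + axis y 1 - (k x + k y)"
  shows "w \<bullet> (M *v w) = M$x$x + M$y$y + 2 * M$x$y - (k x + k y) \<bullet> (c x + c y)"
proof -
  have Mw: "(M *v w) $ j = (if j \<in> {x,y} then M$x$j + M$y$j - (k x + k y) \<bullet> c j else 0)" for j
    using M_k[of x j] M_k[of y j]
    by (auto simp: w_def matrix_vector_mult_diff_distrib matrix_vector_right_distrib
        matrix_vector_mult_basis column_def sym inner_add_left)
  have "w \<bullet> (M *v w) = (\<Sum>j\<in>{x,y}. w $ j * (M *v w) $ j)"
    unfolding inner_vec_def inner_real_def by (rule sum.mono_neutral_right) (auto simp: Mw)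
  also have "\<dots> = (M *v w) $ x + (M *v w) $ y"
    using xy by (simp add: w_def k_block axis_def)
  finally show ?thesis
    using xy by (simp add: Mw sym inner_add_right)
qed

end

lemma reduced_quadratic_form:
  fixes M :: "real^'n::finite^'n" and z :: "real^'n"
  assumes xy: "x \<noteq> y"
  defines "w \<equiv> (\<chi> i. if i \<in> {x,y} then 0 else z$i)"
  shows "z \<bullet> (reduced M x y *v z) = w \<bullet> (M *v w) + (z$x)\<^sup>2 + (z$y)\<^sup>2"
proof -
  have Zz: "(reduced M x y *v z) $ i = (if i \<in> {x,y} then z$i else (M *v w) $ i)" for i
  proof (cases "i \<in> {x,y}")
    case True
    thus ?thesis by (simp add: reduced_mult_at_block)
  next
    case False
    thus ?thesis
      unfolding matrix_vector_mult_def reduced_def w_def vec_lambda_beta by (auto intro!: sum.cong)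
  qed
  have "z \<bullet> (reduced M x y *v z)
      = (\<Sum>i\<in>UNIV. w$i * (M *v w)$i + (if i \<in> {x,y} then (z$i)\<^sup>2 else 0))"
    unfolding inner_vec_def inner_real_def by (intro sum.cong) (auto simp: Zz w_def power2_eq_square)
  also have "\<dots> = w \<bullet> (M *v w) + (\<Sum>i\<in>{x,y}. (z$i)\<^sup>2)"
    using sum.inter_restrict[of UNIV "\<lambda>i. (z$i)\<^sup>2" "{x,y}"] by (simp add: sum.distrib inner_vec_def)
  finally show ?thesis using xy by simp
qed

lemma permuted_inverse_form:
  fixes Z Q :: "real^'n::finite^'n"
  assumes bij: "bij \<sigma>" and invariant: "\<And>i j. Z $ \<sigma> i $ \<sigma> j = Z $ i $ j"
    and right: "Z ** Q = mat 1" and left: "Q ** Z = mat 1"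
  shows "(Q *v (\<chi> i. p $ \<sigma> i)) \<bullet> (\<chi> i. q $ \<sigma> i) = (Q *v p) \<bullet> q"
proof -
  define perm :: "real^'n \<Rightarrow> real^'n" where "perm v = (\<chi> i. v $ \<sigma> i)" for v
  have reindex: "(\<Sum>j\<in>UNIV. g (\<sigma> j)) = (\<Sum>j\<in>UNIV. g j)" for g :: "'n \<Rightarrow> real"
    using sum.reindex_bij_betw[of \<sigma> UNIV UNIV g] bij by (simp add: bij_def bij_betw_def)
  have Z_perm: "Z *v perm v = perm (Z *v v)" for v
  proof -
    have "(perm (Z *v v)) $ i = (\<Sum>j\<in>UNIV. Z $ \<sigma> i $ \<sigma> j * v $ \<sigma> j)" for i
      using reindex[of "\<lambda>j. Z $ \<sigma> i $ j * v $ j"] by (simp add: perm_def matrix_vector_mult_def)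
    thus ?thesis by (simp add: vec_eq_iff perm_def matrix_vector_mult_def invariant)
  qed
  have "Q *v perm p = perm (Q *v p)"
    using arg_cong[OF Z_perm[of "Q *v p"], of "(*v) Q"]
    by (simp add: matrix_vector_mul_assoc left right)
  hence "(Q *v perm p) \<bullet> perm q = (\<Sum>i\<in>UNIV. (Q *v p) $ \<sigma> i * q $ \<sigma> i)"
    by (simp add: inner_vec_def perm_def)
  also have "\<dots> = (Q *v p) \<bullet> q"
    using reindex[of "\<lambda>i. (Q *v p) $ i * q $ i"] by (simp add: inner_vec_def)
  finally show ?thesis by (simp add: perm_def)
qed

section \<open>Adjacency matrices\<close>

lemma adj_matrix_symmetric:
  assumes "\<And>u v. F u v \<Longrightarrow> F v u"
  shows "transpose (adj_matrix F) = adj_matrix (F :: 'n::finite \<Rightarrow> 'n \<Rightarrow> bool)"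
  using assms by (auto simp: symmetric_matrix_iff adj_matrix_def)

lemma shifted_adj_entry:
  "(mat t - adj_matrix F) $ i $ j = (if i = j then t else 0) - (if F i j then 1 else 0)"
  by (simp add: adj_matrix_def mat_def)

lemma adj_matrix_mult_vector: "(adj_matrix F *v z) $ i = (\<Sum>j\<in>UNIV. if F i j then z$j else 0)"
  by (simp add: matrix_vector_mult_def adj_matrix_def if_distrib[of "\<lambda>b. b * _"] cong: if_cong)

lemma shifted_adj_quadratic_form:
  "z \<bullet> ((mat t - adj_matrix F) *v z) = t * (z \<bullet> z) - (\<Sum>i\<in>UNIV. \<Sum>j\<in>UNIV. (if F i j then z$i * z$j else 0))"
proof -
  have "z \<bullet> (adj_matrix F *v z) = (\<Sum>i\<in>UNIV. \<Sum>j\<in>UNIV. (if F i j then z$i * z$j else 0))"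
    unfolding inner_vec_def matrix_vector_mult_def adj_matrix_def vec_lambda_beta
    by (simp add: sum_distrib_left if_distrib[of "\<lambda>a. _ * a"] if_distrib[of "\<lambda>a. a * _"] cong: if_cong)
  thus ?thesis by (simp add: mat_minus_mult_vector inner_diff_right)
qed

lemma index_spectral_bound:
  fixes F :: "'n::finite \<Rightarrow> 'n \<Rightarrow> bool"
  assumes "\<And>u v. F u v \<Longrightarrow> F v u"
  shows "finite {t. char_poly F t = 0}" and "{t. char_poly F t = 0} \<noteq> {}"
    and "t \<ge> index F \<Longrightarrow> z \<bullet> ((mat t - adj_matrix F) *v z) \<ge> 0"
  using finite_char_roots[OF adj_matrix_symmetric] psd_above_char_roots[OF adj_matrix_symmetric] assms
  unfolding char_poly_def index_def by blast+

lemma char_poly_nonneg_above_index: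
  assumes "\<And>u v. F u v \<Longrightarrow> F v u" and "t \<ge> index F"
  shows "char_poly F t \<ge> 0"
  unfolding char_poly_def by (rule det_nonneg_if_psd) (rule index_spectral_bound(3)[OF assms])

lemma shifted_adj_definite_off_roots:
  fixes F :: "'n::finite \<Rightarrow> 'n \<Rightarrow> bool" and w :: "real^'n"
  assumes symF: "\<And>u v. F u v \<Longrightarrow> F v u"
    and psd: "\<And>z. z \<bullet> ((mat t - adj_matrix F) *v z) \<ge> 0"
    and reach: "\<And>v. \<exists>s\<in>S. F\<^sup>*\<^sup>* s v"
    and nonzero: "w \<noteq> 0" and vanish: "\<And>s. s \<in> S \<Longrightarrow> w$s = 0"
  shows "w \<bullet> ((mat t - adj_matrix F) *v w) > 0"
proof (rule ccontr)
  let ?M = "mat t - adj_matrix F"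
  assume not_pos: "\<not> ?thesis"
  define a where "a = (\<chi> i. \<bar>w$i\<bar>)"
  have "a \<bullet> a = w \<bullet> w"
    unfolding a_def inner_vec_def by (intro sum.cong) auto
  moreover have "(\<Sum>i\<in>UNIV. \<Sum>j\<in>UNIV. (if F i j then w$i * w$j else 0))
      \<le> (\<Sum>i\<in>UNIV. \<Sum>j\<in>UNIV. (if F i j then a$i * a$j else 0))"
    unfolding a_def by (intro sum_mono) (auto simp: abs_mult[symmetric])
  ultimately have "a \<bullet> (?M *v a) \<le> w \<bullet> (?M *v w)"
    by (simp add: shifted_adj_quadratic_form)
  hence "a \<bullet> (?M *v a) = 0" using not_pos psd[of a] by linarith
  moreover have "transpose ?M = ?M"
    using symF by (auto simp: symmetric_matrix_iff adj_matrix_def mat_def)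
  ultimately have "?M *v a = 0" using psd_kernel psd by blast
  hence row: "t * a$i = (\<Sum>j\<in>UNIV. if F i j then a$j else 0)" for i
    by (simp add: vec_eq_iff mat_minus_mult_vector adj_matrix_mult_vector)
  have propagate: "a$v = 0" if "a$u = 0" "F u v" for u v
  proof -
    have "(\<Sum>j\<in>UNIV. if F u j then a$j else 0) = 0" using row[of u] that(1) by simp
    moreover have "\<And>j. (if F u j then a$j else 0) \<ge> 0" by (simp add: a_def)
    ultimately have "\<forall>j. (if F u j then a$j else 0) = 0"
      using sum_nonneg_eq_0_iff[of UNIV "\<lambda>j. if F u j then a$j else 0"] by simp
    thus ?thesis using that(2) by (metis (full_types))
  qed
  have "a$v = 0" for v
  proof -
    obtain s where "s \<in> S" and "F\<^sup>*\<^sup>* s v" using reach by blast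
    from \<open>F\<^sup>*\<^sup>* s v\<close> show ?thesis
    proof (induction rule: rtranclp_induct)
      case base
      show ?case using vanish[OF \<open>s \<in> S\<close>] by (simp add: a_def)
    next
      case (step u v)
      thus ?case using propagate by blast
    qed
  qed
  hence "w = 0" by (simp add: a_def vec_eq_iff)
  thus False using nonzero by simp
qed

text \<open>If the characteristic polynomial of F exceeds that of F' from the index of F' on, then
  F has no characteristic root there, so its index is smaller.\<close>

lemma index_le_if_char_poly_dominates:
  fixes F F' :: "'n::finite \<Rightarrow> 'n \<Rightarrow> bool"
  assumes symF: "\<And>u v. F u v \<Longrightarrow> F v u" and symF': "\<And>u v. F' u v \<Longrightarrow> F' v u"
    and dominates: "\<And>t. t \<ge> index F' \<Longrightarrow> char_poly F' t < char_poly F t"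
  shows "index F \<le> index F'"
proof -
  have "r < index F'" if "char_poly F r = 0" for r
    using that dominates[of r] char_poly_nonneg_above_index[of F' r] symF' by force
  moreover have "finite {t. char_poly F t = 0}" by (rule index_spectral_bound(1)) (rule symF)
  moreover have "{t. char_poly F t = 0} \<noteq> {}" by (rule index_spectral_bound(2)) (rule symF)
  ultimately show ?thesis unfolding index_def by (simp add: less_imp_le)
qed

definition indicator_vec :: "'n set \<Rightarrow> real^'n" where
  "indicator_vec A = (\<chi> r. if r \<in> A then 1 else 0)"

lemma indicator_vec_union:
  "A \<inter> B = {} \<Longrightarrow> indicator_vec (A \<union> B) = indicator_vec A + indicator_vec B"
  by (auto simp: vec_eq_iff indicator_vec_def)

lemma indicator_vec_permute: "(\<chi> i. indicator_vec A $ \<sigma> i) = indicator_vec {r. \<sigma> r \<in> A}"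
  by (simp add: vec_eq_iff indicator_vec_def)

lemma indicator_vec_nonneg: "indicator_vec A $ i \<ge> 0"
  by (simp add: indicator_vec_def)

lemma indicator_vec_nonzero: "A \<noteq> {} \<Longrightarrow> indicator_vec A \<noteq> 0"
  by (auto simp: vec_eq_iff indicator_vec_def)

lemma outer_column_shifted_adj:
  "u \<in> {x,y} \<Longrightarrow> outer_column (mat t - adj_matrix F) x y u = - indicator_vec {r. r \<notin> {x,y} \<and> F r u}"
  by (auto simp: vec_eq_iff outer_column_def indicator_vec_def adj_matrix_def mat_def)

text \<open>The final inequality between the two 2x2 determinants, as a statement about real numbers.\<close>

lemma two_by_two_gap:
  fixes t \<alpha> \<beta> \<gamma> \<delta> aa bb ab e :: real
  assumes P: "2*\<gamma> + aa > 0" and R: "2*\<delta> + bb > 0" and ab: "ab \<ge> 0"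
    and test: "2*t - 2*e - (2*\<alpha> + 2*\<beta> + 4*\<gamma> + 4*\<delta> + aa + bb + 2*ab) \<ge> 0"
  shows "(t - \<alpha>) * (t - (\<alpha> + aa + bb + 2*\<gamma> + 2*\<delta> + 2*ab)) - (e + \<beta> + \<gamma> + \<delta>)\<^sup>2
       < (t - (\<alpha> + 2*\<gamma> + aa)) * (t - (\<alpha> + 2*\<delta> + bb)) - (e + \<beta> + \<gamma> + \<delta> + ab)\<^sup>2"
proof -
  define s where "s = 2*(t - \<alpha>) - 2*(e + \<beta> + \<gamma> + \<delta>) - ab"
  have "s \<ge> 0" using test P R ab by (simp add: s_def)
  hence "(2*\<gamma> + aa) * (2*\<delta> + bb) + ab * s > 0"
    using P R ab by (simp add: add_pos_nonneg)
  moreover have "(t - (\<alpha> + 2*\<gamma> + aa)) * (t - (\<alpha> + 2*\<delta> + bb)) - (e + \<beta> + \<gamma> + \<delta> + ab)\<^sup>2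
      - ((t - \<alpha>) * (t - (\<alpha> + aa + bb + 2*\<gamma> + 2*\<delta> + 2*ab)) - (e + \<beta> + \<gamma> + \<delta>)\<^sup>2)
      = (2*\<gamma> + aa) * (2*\<delta> + bb) + ab * s"
    by (simp add: s_def algebra_simps power2_eq_square)
  ultimately show ?thesis by linarith
qed

section \<open>The symmetric K_xy-operation\<close>

locale symmetric_Kxy =
  fixes E :: "'n::finite \<Rightarrow> 'n \<Rightarrow> bool" and K :: "'n set" and x y :: 'n and \<sigma> :: "'n \<Rightarrow> 'n"
  assumes simple: "simple_graph E" and connected: "connected_graph E"
    and xy: "x \<noteq> y" and xK: "x \<in> K" and yK: "y \<in> K"
    and aut: "graph_automorphism (Kop_core E K x y) \<sigma>"
    and \<sigma>_x: "\<sigma> x = y" and \<sigma>_y: "\<sigma> y = x"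
    and \<sigma>_fixes: "\<And>v. v \<in> Xset E K x y \<union> Xset E K y x \<Longrightarrow> \<sigma> v = v"
    and X_nonempty: "Xset E K x y \<noteq> {}" and Y_nonempty: "Xset E K y x \<noteq> {}"
begin

abbreviation "X \<equiv> Xset E K x y"

abbreviation "Y \<equiv> Xset E K y x"

abbreviation "E' \<equiv> Kop E K x y"

abbreviation "E0 \<equiv> Kop_core E K x y"

lemma E_sym: "E u v \<Longrightarrow> E v u"
  using simple by (auto simp: simple_graph_def)

lemma E_irrefl: "\<not> E v v"
  using simple by (auto simp: simple_graph_def)

lemma mem_X: "v \<in> X \<longleftrightarrow> E x v \<and> v \<notin> K \<and> \<not> E y v"
  by (auto simp: Xset_def nbh_def)

lemma mem_Y: "v \<in> Y \<longleftrightarrow> E y v \<and> v \<notin> K \<and> \<not> E x v"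
  by (auto simp: Xset_def nbh_def)

lemma X_outside: "v \<in> X \<Longrightarrow> v \<notin> {x,y}"
  using mem_X xK yK by auto

lemma Y_outside: "v \<in> Y \<Longrightarrow> v \<notin> {x,y}"
  using mem_Y xK yK by auto

lemma E'_iff: "E' u v \<longleftrightarrow> (E u v \<and> \<not> ((u = x \<and> v \<in> X) \<or> (v = x \<and> u \<in> X)))
    \<or> (u = y \<and> v \<in> X) \<or> (v = y \<and> u \<in> X)"
  by (simp add: Kop_def)

lemma E0_iff: "E0 u v \<longleftrightarrow> E u v \<and> \<not> ((u = x \<and> v \<in> X) \<or> (v = x \<and> u \<in> X))
    \<and> \<not> ((u = y \<and> v \<in> Y) \<or> (v = y \<and> u \<in> Y))"
  by (simp add: Kop_core_def)

lemma E'_sym: "E' u v \<Longrightarrow> E' v u"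
  using E_sym by (auto simp: E'_iff)

lemma E'_irrefl: "\<not> E' v v"
  using E_irrefl X_outside by (auto simp: E'_iff)

lemma same_outside: "i \<notin> {x,y} \<Longrightarrow> j \<notin> {x,y} \<Longrightarrow> (E' i j \<longleftrightarrow> E i j) \<and> (E0 i j \<longleftrightarrow> E i j)"
  by (auto simp: E'_iff E0_iff)

lemma E'_xy: "E' x y \<longleftrightarrow> E x y"
  using X_outside by (auto simp: E'_iff)

text \<open>Every vertex is reachable from x or y in G': an edge xv of G with v in X is replaced by yv.\<close>

lemma E'_reachable: "\<exists>s\<in>{x,y}. E'\<^sup>*\<^sup>* s v"
proof -
  have "E\<^sup>*\<^sup>* x v" using connected by (simp add: connected_graph_def)
  thus ?thesis
  proof (induction rule: rtranclp_induct)
    case (step w u)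
    show ?case
    proof (cases "E' w u")
      case True
      thus ?thesis using step.IH by (meson rtranclp.rtrancl_into_rtrancl)
    next
      case False
      hence "(w = x \<and> u \<in> X) \<or> (u = x \<and> w \<in> X)" using step.hyps(2) by (auto simp: E'_iff)
      thus ?thesis by (auto simp: E'_iff)
    qed
  qed auto
qed

definition Nx :: "'n set" where "Nx = {r. r \<notin> {x,y} \<and> E0 r x}"

definition Ny :: "'n set" where "Ny = {r. r \<notin> {x,y} \<and> E0 r y}"

lemma E_columns:
  "{r. r \<notin> {x,y} \<and> E r x} = Nx \<union> X" "{r. r \<notin> {x,y} \<and> E r y} = Ny \<union> Y"
  using X_outside Y_outside E_sym xK yK
  by (auto simp: Nx_def Ny_def E0_iff mem_X mem_Y)

lemma E'_columns:
  "{r. r \<notin> {x,y} \<and> E' r x} = Nx" "{r. r \<notin> {x,y} \<and> E' r y} = (Ny \<union> X) \<union> Y"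
  using X_outside Y_outside E_sym xy xK yK
  by (auto simp: Nx_def Ny_def E0_iff E'_iff mem_X mem_Y)

lemma columns_disjoint: "Nx \<inter> X = {}" "Ny \<inter> Y = {}" "Ny \<inter> X = {}" "(Ny \<union> X) \<inter> Y = {}"
  using E_sym by (auto simp: Nx_def Ny_def E0_iff mem_X mem_Y)

lemma \<sigma>_bij: "bij \<sigma>"
  using aut by (simp add: graph_automorphism_def)

lemma \<sigma>_E0: "E0 (\<sigma> u) (\<sigma> v) \<longleftrightarrow> E0 u v"
  using aut by (simp add: graph_automorphism_def)

lemma \<sigma>_block: "\<sigma> i \<in> {x,y} \<longleftrightarrow> i \<in> {x,y}"
  using \<sigma>_x \<sigma>_y \<sigma>_bij by (metis bij_is_inj inj_eq insert_iff singletonD)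

lemma \<sigma>_X: "\<sigma> r \<in> X \<longleftrightarrow> r \<in> X" and \<sigma>_Y: "\<sigma> r \<in> Y \<longleftrightarrow> r \<in> Y"
  using \<sigma>_fixes \<sigma>_bij by (metis UnI1 UnI2 bij_is_inj inj_eq)+

lemma \<sigma>_Ny: "\<sigma> r \<in> Ny \<longleftrightarrow> r \<in> Nx"
  using \<sigma>_block[of r] \<sigma>_E0[of r x] by (auto simp: Nx_def Ny_def \<sigma>_x)

end

section \<open>Comparison of the characteristic polynomials above the index of G'\<close>

locale symmetric_Kxy_above_index = symmetric_Kxy +
  fixes t :: real
  assumes above_index: "t \<ge> index (Kop E K x y)"
begin

definition M where "M = mat t - adj_matrix E"

definition M' where "M' = mat t - adj_matrix E'"

abbreviation "Z \<equiv> reduced M x y"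

definition Q where "Q = matrix_inv Z"

definition form where "form p q = (Q *v p) \<bullet> q"

lemma M_entry: "M$i$j = (if i = j then t else 0) - (if E i j then 1 else 0)"
  unfolding M_def by (rule shifted_adj_entry)

lemma M'_entry: "M'$i$j = (if i = j then t else 0) - (if E' i j then 1 else 0)"
  unfolding M'_def by (rule shifted_adj_entry)

lemma M_sym: "M$i$j = M$j$i" and M'_sym: "M'$i$j = M'$j$i"
  using E_sym E'_sym by (auto simp: M_entry M'_entry)

lemma M'_psd: "z \<bullet> (M' *v z) \<ge> 0"
  unfolding M'_def using index_spectral_bound(3)[OF E'_sym above_index] .

lemma reduced_M': "reduced M' x y = Z"
proof -
  have "M$i$j = M'$i$j" if "i \<notin> {x,y}" "j \<notin> {x,y}" for i j
    using same_outside[OF that] by (simp add: M_entry M'_entry)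
  thus ?thesis unfolding reduced_def vec_eq_iff by auto
qed

lemma Z_entry: "Z$i$j = (if i \<notin> {x,y} \<and> j \<notin> {x,y} then M'$i$j else if i = j then 1 else 0)"
proof -
  have "Z$i$j = reduced M' x y $i$j" by (simp only: reduced_M')
  thus ?thesis by (simp add: reduced_def)
qed

lemma Z_pd:
  assumes "z \<noteq> 0"
  shows "z \<bullet> (Z *v z) > 0"
proof -
  define w where "w = (\<chi> i. if i \<in> {x,y} then 0 else z$i)"
  have split: "z \<bullet> (Z *v z) = w \<bullet> (M' *v w) + (z$x)\<^sup>2 + (z$y)\<^sup>2"
    unfolding w_def reduced_M'[symmetric] by (rule reduced_quadratic_form[OF xy])
  show ?thesis
  proof (cases "w = 0")
    case True
    hence "z$x \<noteq> 0 \<or> z$y \<noteq> 0" using assms by (auto simp: w_def vec_eq_iff split: if_splits)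
    thus ?thesis using split M'_psd[of w] by (auto simp: add_nonneg_pos add_pos_nonneg)
  next
    case False
    have "w \<bullet> (M' *v w) > 0"
      unfolding M'_def
      by (rule shifted_adj_definite_off_roots[OF E'_sym _ E'_reachable False])
         (use M'_psd in \<open>auto simp: M'_def w_def\<close>)
    thus ?thesis using split by (simp add: add_pos_nonneg)
  qed
qed

lemma det_Z_pos: "det Z > 0"
  using Z_pd by (rule det_pos_if_pd)

lemma Z_Q: "Z ** Q = mat 1" and Q_Z: "Q ** Z = mat 1"
proof -
  have "invertible Z" using det_Z_pos invertible_det_nz by force
  hence "Z ** Q = mat 1 \<and> Q ** Z = mat 1"
    unfolding Q_def matrix_inv_def invertible_def by (rule someI_ex)
  thus "Z ** Q = mat 1" "Q ** Z = mat 1" by simp_all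
qed

lemma Z_Q_vector: "Z *v (Q *v p) = p"
  by (simp add: matrix_vector_mul_assoc Z_Q)

lemma form_sym: "form p q = form q p"
proof -
  have "transpose Z = Z" using M'_sym by (auto simp: symmetric_matrix_iff Z_entry)
  hence "(Q *v p) \<bullet> (Z *v (Q *v q)) = (Q *v q) \<bullet> (Z *v (Q *v p))"
    by (rule symmetric_matrix_inner)
  thus ?thesis by (simp add: form_def Z_Q_vector inner_commute)
qed

lemma form_pos:
  assumes "p \<noteq> 0"
  shows "form p p > 0"
proof -
  have "Q *v p \<noteq> 0" using Z_Q_vector[of p] assms by auto
  hence "(Q *v p) \<bullet> (Z *v (Q *v p)) > 0" by (rule Z_pd)
  thus ?thesis by (simp add: form_def Z_Q_vector)
qed

lemma form_nonneg:
  assumes "\<And>i. p$i \<ge> 0" and "\<And>i. q$i \<ge> 0"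
  shows "form p q \<ge> 0"
proof -
  have "(Q *v p) $ i \<ge> 0" for i
    by (rule nonneg_solution_if_pd_offdiag_nonpos[OF Z_pd _ assms(1) Z_Q_vector])
       (auto simp: Z_entry M'_entry)
  thus ?thesis unfolding form_def inner_vec_def using assms(2) by (intro sum_nonneg) simp
qed

lemma form_add_left: "form (p + q) r = form p r + form q r"
  and form_add_right: "form p (q + r) = form p q + form p r"
  and form_minus_left: "form (- p) q = - form p q"
  and form_minus_right: "form p (- q) = - form p q"
  by (simp_all add: form_def matrix_vector_right_distrib inner_add_left inner_add_right
      matrix_vector_mult_diff_distrib[of Q 0 p, simplified])

lemma form_diff_left: "form (p - q) r = form p r - form q r"
  and form_diff_right: "form p (q - r) = form p q - form p r"
  using form_add_left[of p "- q"] form_add_right[of p q "- r"] form_minus_left form_minus_right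
  by simp_all

lemma form_permute: "form (\<chi> i. p $ \<sigma> i) (\<chi> i. q $ \<sigma> i) = form p q"
  unfolding form_def
proof (rule permuted_inverse_form[OF \<sigma>_bij _ Z_Q Q_Z])
  fix i j
  have inj: "\<sigma> i = \<sigma> j \<longleftrightarrow> i = j" using \<sigma>_bij by (simp add: bij_is_inj inj_eq)
  show "Z $ \<sigma> i $ \<sigma> j = Z $ i $ j"
  proof (cases "i \<notin> {x,y} \<and> j \<notin> {x,y}")
    case True
    hence "E' (\<sigma> i) (\<sigma> j) \<longleftrightarrow> E' i j"
      using same_outside \<sigma>_E0 \<sigma>_block by metis
    thus ?thesis using True inj \<sigma>_block[of i] \<sigma>_block[of j] by (simp add: Z_entry M'_entry)
  next
    case False
    thus ?thesis using inj \<sigma>_block[of i] \<sigma>_block[of j] by (simp only: Z_entry) simp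
  qed
qed

abbreviation "hx \<equiv> indicator_vec Nx"

abbreviation "hy \<equiv> indicator_vec Ny"

abbreviation "a \<equiv> indicator_vec X"

abbreviation "b \<equiv> indicator_vec Y"

abbreviation "\<alpha> \<equiv> form hx hx"

abbreviation "\<beta> \<equiv> form hx hy"

abbreviation "\<gamma> \<equiv> form hx a"

abbreviation "\<delta> \<equiv> form hx b"

abbreviation "aa \<equiv> form a a"

abbreviation "bb \<equiv> form b b"

abbreviation "ab \<equiv> form a b"

abbreviation "e \<equiv> if E x y then 1 else (0::real)"

text \<open>The symmetry of the form and the automorphism reduce all form values to the seven above.\<close>

lemma form_values:
  "form hy hy = \<alpha>" "form hy hx = \<beta>" "form a hx = \<gamma>" "form hy a = \<gamma>" "form a hy = \<gamma>"
  "form b hx = \<delta>" "form hy b = \<delta>" "form b hy = \<delta>" "form b a = ab"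
proof -
  have perm: "(\<chi> i. hy $ \<sigma> i) = hx" "(\<chi> i. a $ \<sigma> i) = a" "(\<chi> i. b $ \<sigma> i) = b"
    by (simp_all add: indicator_vec_permute \<sigma>_Ny \<sigma>_X \<sigma>_Y)
  show "form hy hy = \<alpha>" "form hy a = \<gamma>" "form hy b = \<delta>"
    using form_permute[of hy hy] form_permute[of hy a] form_permute[of hy b] by (simp_all add: perm)
  thus "form hy hx = \<beta>" "form a hx = \<gamma>" "form a hy = \<gamma>" "form b hx = \<delta>" "form b hy = \<delta>"
    "form b a = ab"
    using form_sym[of hy hx] form_sym[of a hx] form_sym[of a hy] form_sym[of b hx] form_sym[of b hy]
      form_sym[of b a]
    by simp_all
qed

lemma columns:
  "outer_column M x y x = - (hx + a)" "outer_column M x y y = - (hy + b)"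
  "outer_column M' x y x = - hx" "outer_column M' x y y = - (hy + a + b)"
proof -
  have "x \<in> {x,y}" "y \<in> {x,y}" by simp_all
  thus "outer_column M x y x = - (hx + a)" "outer_column M x y y = - (hy + b)"
    "outer_column M' x y x = - hx" "outer_column M' x y y = - (hy + a + b)"
    unfolding M_def M'_def
    by (simp_all only: outer_column_shifted_adj E_columns E'_columns indicator_vec_union
        columns_disjoint)
qed

lemma block_entries:
  "M$x$x = t" "M$y$y = t" "M$x$y = - e" "M$y$x = - e"
  "M'$x$x = t" "M'$y$y = t" "M'$x$y = - e" "M'$y$x = - e"
  using xy E_irrefl E'_irrefl E_sym E'_xy E'_sym by (auto simp: M_entry M'_entry)

lemmas form_algebra = form_add_left form_add_right form_minus_left form_minus_right
  form_diff_left form_diff_right form_values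

lemma char_poly_E:
  "char_poly E t = ((t - (\<alpha> + 2*\<gamma> + aa)) * (t - (\<alpha> + 2*\<delta> + bb)) - (e + \<beta> + \<gamma> + \<delta> + ab)\<^sup>2) * det Z"
proof -
  interpret S: schur_block M Q x y using xy M_sym Z_Q by unfold_locales
  have "S.schur x x = t - (\<alpha> + 2*\<gamma> + aa)" "S.schur y y = t - (\<alpha> + 2*\<delta> + bb)"
    "S.schur x y = - (e + \<beta> + \<gamma> + \<delta> + ab)" "S.schur y x = - (e + \<beta> + \<gamma> + \<delta> + ab)"
    by (simp_all add: S.schur_def S.k_def form_def[symmetric] columns block_entries form_algebra)
  thus ?thesis
    unfolding char_poly_def M_def[symmetric] S.schur_det by (simp only: power2_eq_square minus_mult_minus)
qed

lemma char_poly_E':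
  "char_poly E' t = ((t - \<alpha>) * (t - (\<alpha> + aa + bb + 2*\<gamma> + 2*\<delta> + 2*ab)) - (e + \<beta> + \<gamma> + \<delta>)\<^sup>2) * det Z"
proof -
  interpret S: schur_block M' Q x y using xy M'_sym Z_Q reduced_M' by unfold_locales simp_all
  have "S.schur x x = t - \<alpha>" "S.schur y y = t - (\<alpha> + aa + bb + 2*\<gamma> + 2*\<delta> + 2*ab)"
    "S.schur x y = - (e + \<beta> + \<gamma> + \<delta>)" "S.schur y x = - (e + \<beta> + \<gamma> + \<delta>)"
    by (simp_all add: S.schur_def S.k_def form_def[symmetric] columns block_entries form_algebra)
  thus ?thesis unfolding char_poly_def M'_def[symmetric] S.schur_det reduced_M'
    by (simp only: power2_eq_square minus_mult_minus)
qed

text \<open>Positive semidefiniteness of M' tested on the vector of the Schur quadratic form.\<close>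

lemma test_vector_bound: "2*t - 2*e - (2*\<alpha> + 2*\<beta> + 4*\<gamma> + 4*\<delta> + aa + bb + 2*ab) \<ge> 0"
proof -
  interpret S: schur_block M' Q x y using xy M'_sym Z_Q reduced_M' by unfold_locales simp_all
  have "(S.k x + S.k y) \<bullet> (S.c x + S.c y) = form (S.c x + S.c y) (S.c x + S.c y)"
    by (simp add: S.k_def form_def matrix_vector_right_distrib)
  hence "(axis x 1 + axis y 1 - (S.k x + S.k y)) \<bullet> (M' *v (axis x 1 + axis y 1 - (S.k x + S.k y)))
      = 2*t - 2*e - (2*\<alpha> + 2*\<beta> + 4*\<gamma> + 4*\<delta> + aa + bb + 2*ab)"
    using S.schur_quadratic_form by (simp add: columns block_entries form_algebra)
  thus ?thesis using M'_psd by metis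
qed

theorem char_poly_decreases: "char_poly E' t < char_poly E t"
proof -
  have "\<gamma> \<ge> 0" "\<delta> \<ge> 0" "ab \<ge> 0" by (simp_all add: form_nonneg indicator_vec_nonneg)
  moreover have "aa > 0" "bb > 0"
    using X_nonempty Y_nonempty by (simp_all add: form_pos indicator_vec_nonzero)
  ultimately have "(t - \<alpha>) * (t - (\<alpha> + aa + bb + 2*\<gamma> + 2*\<delta> + 2*ab)) - (e + \<beta> + \<gamma> + \<delta>)\<^sup>2
       < (t - (\<alpha> + 2*\<gamma> + aa)) * (t - (\<alpha> + 2*\<delta> + bb)) - (e + \<beta> + \<gamma> + \<delta> + ab)\<^sup>2"
    using test_vector_bound by (intro two_by_two_gap) simp_all
  thus ?thesis unfolding char_poly_E char_poly_E' using det_Z_pos by (rule mult_strict_right_mono)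
qed

end

theorem mainTheorem16:
  fixes E :: "'n::finite \<Rightarrow> 'n \<Rightarrow> bool" and K :: "'n set" and x y :: 'n
  assumes "simple_graph E" and "connected_graph E"
    and "x \<noteq> y" and "x \<in> K" and "y \<in> K"
    and "symmetric_Kop E K x y"
    and "Xset E K x y \<noteq> {}" and "Xset E K y x \<noteq> {}"
  shows "index E \<le> index (Kop E K x y)
    \<and> (\<forall>t::real. t \<ge> index (Kop E K x y) \<longrightarrow> char_poly E t > char_poly (Kop E K x y) t)"
proof -
  obtain \<sigma> where \<sigma>: "graph_automorphism (Kop_core E K x y) \<sigma>" "\<sigma> x = y" "\<sigma> y = x"
    "\<forall>v \<in> Xset E K x y \<union> Xset E K y x. \<sigma> v = v"
    using assms(6) unfolding symmetric_Kop_def by blast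
  interpret symmetric_Kxy E K x y \<sigma>
    using assms \<sigma> by unfold_locales auto
  have decrease: "char_poly E' t < char_poly E t" if "t \<ge> index E'" for t
  proof -
    interpret symmetric_Kxy_above_index E K x y \<sigma> t
      using that by unfold_locales
    show ?thesis by (rule char_poly_decreases)
  qed
  have "index E \<le> index E'"
    using E_sym E'_sym decrease by (rule index_le_if_char_poly_dominates)
  thus ?thesis using decrease by blast
qed

end
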